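(* If $\{Q^{a,n}\}_{(a,n)\in\mathcal I\times\mathbb Z}$ is a collection of polynomials in $\mathcal O$ with widening gap, then the sum $\sum_{(a,n)\in\mathcal I\times\mathbb Z}\frac{\partial Q^{a,n}}{\partial X^{a,n}}$ has only finitely many nonzero terms, and hence is a well-defined polynomial in $\mathcal O$.
   Context: $\mathcal I$ is a finite index set and $\mathcal O=\mathbb C[X^{a,n}]_{(a,n)\in\mathcal I\times\mathbb Z}$. A collection $\{P^{a,n}\}_{(a,n)\in\mathcal I\times\mathbb Z}$ of polynomials in $\mathcal O$ has widening gap if, for every $K\ge1$, $P^{a,n}\in\mathbb C[X^{b,m}:|m|<|n|-K,\ b\in\mathcal I]$ for all $a\in\mathcal I$, for all but finitely many $n\in\mathbb Z$. *)

theory Defs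
  imports Complex_Main "HOL-Library.Poly_Mapping"
begin

text \<open>Polynomials over the complex numbers in (possibly infinitely many) commuting
variables of type 'v: finitely supported maps from monomials (finitely supported
exponent vectors 'v \<Rightarrow>0 nat) to complex coefficients.\<close>

type_synonym 'v cpoly = "('v \<Rightarrow>\<^sub>0 nat) \<Rightarrow>\<^sub>0 complex"

text \<open>The variables occurring in a polynomial; p lies in C[X^v : v in S] iff vars p is a subset of S.\<close>
definition vars :: "'v cpoly \<Rightarrow> 'v set" where
  "vars p = \<Union>(Poly_Mapping.keys ` Poly_Mapping.keys p)"

definition pderiv_var :: "'v \<Rightarrow> 'v cpoly \<Rightarrow> 'v cpoly" where
  "pderiv_var x p =
     (\<Sum>m\<in>Poly_Mapping.keys p. Poly_Mapping.single (m - Poly_Mapping.single x 1)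
                     (of_nat (Poly_Mapping.lookup m x) * Poly_Mapping.lookup p m))"

definition widening_gap :: "('i \<times> int \<Rightarrow> ('i \<times> int) cpoly) \<Rightarrow> bool" where
  "widening_gap P \<longleftrightarrow>
     (\<forall>K::int. K \<ge> 1 \<longrightarrow> (\<forall>a. finite {n::int.
        \<not> vars (P (a, n)) \<subseteq> {(b, m). \<bar>m\<bar> < \<bar>n\<bar> - K}}))"

end

theory Submission
  imports Defs
begin

lemma pderiv_var_eq_0_if_notin_vars:
  assumes "x \<notin> vars p"
  shows "pderiv_var x p = 0"
proof -
  have "Poly_Mapping.lookup m x = 0" if "m \<in> Poly_Mapping.keys p" for m
    using assms that unfolding vars_def by (auto simp: in_keys_iff)
  then show ?thesis
    unfolding pderiv_var_def by (intro sum.neutral) auto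
qed

text \<open>Already the gap \<open>K = 1\<close> suffices: the index \<open>(a, n)\<close> itself violates
  \<open>|n| < |n| - 1\<close>, so it can occur in \<open>vars (P (a, n))\<close> only for the finitely many
  exceptional \<open>n\<close>.\<close>

lemma widening_gap_finite_self_occurrences:
  fixes P :: "'i::finite \<times> int \<Rightarrow> ('i \<times> int) cpoly"
  assumes "widening_gap P"
  shows "finite {an. an \<in> vars (P an)}"
proof -
  let ?bad = "\<lambda>a. {n. \<not> vars (P (a, n)) \<subseteq> {(b, m). \<bar>m\<bar> < \<bar>n\<bar> - 1}}"
  have finite_bad: "finite (?bad a)" for a
    using assms unfolding widening_gap_def by auto
  have "{an. an \<in> vars (P an)} \<subseteq> (\<Union>a. Pair a ` ?bad a)"
  proof
    fix an assume "an \<in> {an. an \<in> vars (P an)}"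
    moreover obtain a n where "an = (a, n)" by (cases an)
    ultimately have "n \<in> ?bad a" by auto
    then show "an \<in> (\<Union>a. Pair a ` ?bad a)"
      using \<open>an = (a, n)\<close> by blast
  qed
  moreover have "finite (\<Union>a. Pair a ` ?bad a)"
    using finite_bad by auto
  ultimately show ?thesis
    by (rule finite_subset)
qed

theorem corollary3p4:
  fixes Q :: "'i::finite \<times> int \<Rightarrow> ('i \<times> int) cpoly"
  assumes "widening_gap Q"
  shows "finite {an. pderiv_var an (Q an) \<noteq> 0}"
proof (rule finite_subset)
  show "{an. pderiv_var an (Q an) \<noteq> 0} \<subseteq> {an. an \<in> vars (Q an)}"
    using pderiv_var_eq_0_if_notin_vars by force
  show "finite {an. an \<in> vars (Q an)}"
    using assms by (rule widening_gap_finite_self_occurrences)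
qed

end
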